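(* Let $G$ be the corresponding graph of an array $A$ with reach one and let $F$ be a resulting DFS forest of $G$. Let $H=F$ if all components of $F$ are directed paths; otherwise let $H$ be the graph obtained by merging the sub-trees of $F$. Let $H_1$ and $H_2$ be two distinct components of $H$, and apply the component merge to $H_1$ and $H_2$. Then the resulting graph contains a directed Hamiltonian path of the merged component, i.e. a directed path visiting every vertex of $V(H_1)\cup V(H_2)$ exactly once.
   Context: An array is a finite sequence $A=(A[1],\dots,A[n])$ of pairwise distinct real numbers. The corresponding graph of $A$ with reach one is the directed graph on $\{1,\dots,n\}$ with an arc $(i,j)$ whenever $j\equiv i\pm1\pmod n$, $j\ne i$, and $A[i]<A[j]$. DFS is run with adjacency lists sorted in increasing $A$-value and a visiting list containing all vertices; the resulting DFS forest consists of the arcs $(\mathrm{parent}(w),w)$ along which DFS discovers vertices; components are components of the underlying undirected graph, each a rooted tree. Merging the sub-trees of $F$: for each component of $F$ whose root has exactly two children $a_1,b_1$, set $p=a_1$, $q=b_1$ and, while both are defined: if $A[p]<A[q]$ add the arc $(p,q)$ and replace $p$ by its smallest-valued child in $F$ (undefined if none); otherwise add the arc $(q,p)$ and replace $q$ by its smallest-valued child in $F$ (undefined if none). Component merge of two distinct components $C,D$: set $p,q$ to the minimum-valued vertices of $C,D$; while both are defined: if $A[p]<A[q]$ add the arc $(p,q)$ and replace $p$ by the smallest-valued out-neighbour of $p$ within $C$ (ignoring arcs added during this merge; undefined if none); otherwise add $(q,p)$ and replace $q$ analogously within $D$. *)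

theory Defs
  imports Complex_Main "HOL-Library.While_Combinator"
begin

text \<open>An array of length n is a function A on the index set {1..n}, injective there
  (pairwise distinct real values). Arcs are pairs (i,j).\<close>

definition reach_one_graph :: "nat \<Rightarrow> (nat \<Rightarrow> real) \<Rightarrow> (nat \<times> nat) set" where
  "reach_one_graph n A =
     {(i, j). i \<in> {1..n} \<and> j \<in> {1..n} \<and> j \<noteq> i \<and>
              (j mod n = (i + 1) mod n \<or> (j + 1) mod n = i mod n) \<and> A i < A j}"

definition min_by :: "(nat \<Rightarrow> real) \<Rightarrow> nat set \<Rightarrow> nat option" where
  "min_by A S = (if S = {} then None else Some (arg_min A (\<lambda>x. x \<in> S)))"

text \<open>Scanning an adjacency list sorted by increasing A-value and skipping visited vertices
  is the same as always descending to the smallest-valued unvisited out-neighbour.\<close>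

type_synonym dfs_state = "nat set \<times> nat list \<times> nat list \<times> (nat \<times> nat) set"

definition dfs_step :: "(nat \<Rightarrow> real) \<Rightarrow> (nat \<times> nat) set \<Rightarrow> dfs_state \<Rightarrow> dfs_state" where
  "dfs_step A G s = (case s of (vis, st, todo, T) \<Rightarrow>
     (case st of
        v # rest \<Rightarrow>
          (let U = {w. (v, w) \<in> G \<and> w \<notin> vis} in
           if U = {} then (vis, rest, todo, T)
           else (let w = arg_min A (\<lambda>x. x \<in> U) in
                 (insert w vis, w # st, todo, insert (v, w) T)))
      | [] \<Rightarrow>
          (case todo of
             [] \<Rightarrow> (vis, [], [], T)
           | u # us \<Rightarrow> if u \<in> vis then (vis, [], us, T)
                       else (insert u vis, [u], us, T))))"

definition dfs_forest :: "(nat \<Rightarrow> real) \<Rightarrow> (nat \<times> nat) set \<Rightarrow> nat list \<Rightarrow> (nat \<times> nat) set" where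
  "dfs_forest A G vl =
     (case while_option (\<lambda>(vis, st, todo, T). st \<noteq> [] \<or> todo \<noteq> [])
                        (dfs_step A G) ({}, [], vl, {}) of
        Some (vis, st, todo, T) \<Rightarrow> T
      | None \<Rightarrow> {})"

definition component_of :: "nat set \<Rightarrow> (nat \<times> nat) set \<Rightarrow> nat \<Rightarrow> nat set" where
  "component_of V E v = {u \<in> V. (v, u) \<in> (E \<union> E\<inverse>)\<^sup>*}"

definition components :: "nat set \<Rightarrow> (nat \<times> nat) set \<Rightarrow> nat set set" where
  "components V E = component_of V E ` V"

definition is_root :: "nat set \<Rightarrow> (nat \<times> nat) set \<Rightarrow> nat \<Rightarrow> bool" where
  "is_root V F r \<longleftrightarrow> r \<in> V \<and> (\<forall>u. (u, r) \<notin> F)"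

definition children :: "(nat \<times> nat) set \<Rightarrow> nat \<Rightarrow> nat set" where
  "children F v = {w. (v, w) \<in> F}"

definition is_directed_path_comp :: "(nat \<times> nat) set \<Rightarrow> nat set \<Rightarrow> bool" where
  "is_directed_path_comp F C \<longleftrightarrow>
     (\<exists>xs. distinct xs \<and> set xs = C \<and>
           {(u, v) \<in> F. u \<in> C \<and> v \<in> C} = set (zip xs (tl xs)))"

definition merge_step ::
  "(nat \<Rightarrow> real) \<Rightarrow> (nat \<Rightarrow> nat option) \<Rightarrow> (nat \<Rightarrow> nat option) \<Rightarrow>
   nat option \<times> nat option \<times> (nat \<times> nat) set \<Rightarrow> nat option \<times> nat option \<times> (nat \<times> nat) set" where
  "merge_step A nxp nxq s = (case s of
     (Some p, Some q, E) \<Rightarrow>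
        if A p < A q then (nxp p, Some q, insert (p, q) E)
        else (Some p, nxq q, insert (q, p) E)
   | _ \<Rightarrow> s)"

definition merge_arcs ::
  "(nat \<Rightarrow> real) \<Rightarrow> (nat \<Rightarrow> nat option) \<Rightarrow> (nat \<Rightarrow> nat option) \<Rightarrow> nat \<Rightarrow> nat \<Rightarrow> (nat \<times> nat) set" where
  "merge_arcs A nxp nxq p0 q0 =
     (case while_option (\<lambda>(p, q, E). p \<noteq> None \<and> q \<noteq> None)
                        (merge_step A nxp nxq) (Some p0, Some q0, {}) of
        Some (p, q, E) \<Rightarrow> E
      | None \<Rightarrow> {})"

definition merge_subtrees :: "nat set \<Rightarrow> (nat \<Rightarrow> real) \<Rightarrow> (nat \<times> nat) set \<Rightarrow> (nat \<times> nat) set" where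
  "merge_subtrees V A F =
     F \<union> \<Union> {merge_arcs A (\<lambda>v. min_by A (children F v)) (\<lambda>v. min_by A (children F v)) a b
           | r a b. is_root V F r \<and> children F r = {a, b} \<and> a \<noteq> b}"

definition graph_H :: "nat set \<Rightarrow> (nat \<Rightarrow> real) \<Rightarrow> (nat \<times> nat) set \<Rightarrow> (nat \<times> nat) set" where
  "graph_H V A F =
     (if \<forall>C \<in> components V F. is_directed_path_comp F C then F
      else merge_subtrees V A F)"

text \<open>Component merge of C and D in graph H: start at the minimum-valued vertices,
  advance by the smallest-valued out-neighbour within the respective component in H
  (arcs added during this merge are ignored).\<close>

definition component_merge ::
  "(nat \<Rightarrow> real) \<Rightarrow> (nat \<times> nat) set \<Rightarrow> nat set \<Rightarrow> nat set \<Rightarrow> (nat \<times> nat) set" where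
  "component_merge A H C D =
     H \<union> merge_arcs A
           (\<lambda>v. min_by A {w \<in> C. (v, w) \<in> H})
           (\<lambda>v. min_by A {w \<in> D. (v, w) \<in> H})
           (arg_min A (\<lambda>x. x \<in> C)) (arg_min A (\<lambda>x. x \<in> D))"

definition has_ham_path :: "(nat \<times> nat) set \<Rightarrow> nat set \<Rightarrow> bool" where
  "has_ham_path R S \<longleftrightarrow>
     (\<exists>xs. distinct xs \<and> set xs = S \<and> set (zip xs (tl xs)) \<subseteq> R)"

end

theory Submission
  imports Defs
begin

text \<open>
  Call \<open>S\<close> order-linked in \<open>R\<close> if \<open>R\<close> contains an arc from every element of \<open>S\<close> to
  its successor in the \<open>A\<close>-order of \<open>S\<close>; the sorted enumeration of such an \<open>S\<close> is then a
  Hamiltonian path. The DFS forest \<open>F\<close> is increasing, every vertex has at most one parent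
  and, as a subgraph of the cycle, at most two neighbours. Hence each tree of \<open>F\<close> is either an
  increasing path or a root with two increasing paths below it, and the two-pointer merge loop
  turns two order-linked disjoint sets into an order-linked union. So every tree of \<open>H\<close>, and
  these trees are exactly the components of \<open>H\<close>, is order-linked in \<open>H\<close>; the component merge
  of two of them is order-linked again.
\<close>

section \<open>Sorted Hamiltonian paths\<close>

definition order_succ :: "('a \<Rightarrow> 'b::linorder) \<Rightarrow> 'a set \<Rightarrow> 'a \<Rightarrow> 'a \<Rightarrow> bool" where
  "order_succ A S x y \<longleftrightarrow> x \<in> S \<and> y \<in> S \<and> A x < A y \<and> (\<forall>z\<in>S. \<not> (A x < A z \<and> A z < A y))"

definition order_linked :: "('a \<Rightarrow> 'b::linorder) \<Rightarrow> ('a \<times> 'a) set \<Rightarrow> 'a set \<Rightarrow> bool" where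
  "order_linked A R S \<longleftrightarrow> (\<forall>x y. order_succ A S x y \<longrightarrow> (x, y) \<in> R)"

definition increasing_arcs :: "('a \<Rightarrow> 'b::linorder) \<Rightarrow> 'a set \<Rightarrow> ('a \<times> 'a) set" where
  "increasing_arcs A S = {(x, y). x \<in> S \<and> y \<in> S \<and> A x < A y}"

lemma order_succ_subset:
  "order_succ A S x y \<Longrightarrow> x \<in> T \<Longrightarrow> y \<in> T \<Longrightarrow> T \<subseteq> S \<Longrightarrow> order_succ A T x y"
  unfolding order_succ_def by blast

lemma order_linked_mono: "order_linked A R S \<Longrightarrow> R \<subseteq> R' \<Longrightarrow> order_linked A R' S"
  unfolding order_linked_def by auto

lemma order_succ_exists:
  assumes "finite S" "x \<in> S" "y \<in> S" "A x < A y"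
  shows "\<exists>y'. order_succ A S x y'"
proof -
  let ?T = "{z\<in>S. A x < A z}"
  have "finite ?T" "?T \<noteq> {}" using assms by auto
  then obtain m where "m \<in> ?T" "\<forall>z\<in>?T. \<not> A z < A m"
    using arg_min_if_finite(1,2)[of ?T A] by blast
  then have "order_succ A S x m" using assms unfolding order_succ_def by auto
  then show ?thesis by blast
qed

lemma order_linked_sorted_path:
  assumes "finite S" "inj_on A S" "order_linked A R S"
  shows "\<exists>xs. distinct xs \<and> set xs = S \<and> set (zip xs (tl xs)) \<subseteq> R \<and>
                (xs \<noteq> [] \<longrightarrow> (\<forall>y\<in>S. A (hd xs) \<le> A y))"
  using assms
proof (induction S rule: finite_psubset_induct)
  case (psubset S)
  show ?case
  proof (cases "S = {}")
    case False
    then obtain x where x: "x \<in> S" "\<forall>y\<in>S. \<not> A y < A x"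
      using arg_min_if_finite(1,2)[OF psubset(1), of A] by blast
    let ?S' = "S - {x}"
    have x_min: "A x < A y" if "y \<in> ?S'" for y
      using x that psubset(3) by (metis DiffE inj_on_contraD insertI1 linorder_neqE)
    have "order_linked A R ?S'"
      using psubset(4) x_min unfolding order_linked_def order_succ_def by force
    then obtain xs where xs: "distinct xs" "set xs = ?S'" "set (zip xs (tl xs)) \<subseteq> R"
      "xs \<noteq> [] \<longrightarrow> (\<forall>y\<in>?S'. A (hd xs) \<le> A y)"
    proof -
      have "?S' \<subset> S" using x(1) by blast
      moreover have "inj_on A ?S'" using psubset(3) by (rule inj_on_subset) blast
      ultimately show thesis using psubset(2) \<open>order_linked A R ?S'\<close> that by blast
    qed
    have "set (zip (x # xs) xs) \<subseteq> R"
    proof (cases xs)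
      case (Cons h t)
      then have "h \<in> ?S'" using xs(2) by auto
      moreover have "A h \<le> A z" if "z \<in> S" "A x < A z" for z
        using xs(4) Cons that by auto
      ultimately have "order_succ A S x h"
        using x_min x(1) unfolding order_succ_def by (auto simp: not_less)
      then have "(x, h) \<in> R" using psubset(4) unfolding order_linked_def by auto
      then show ?thesis using xs(3) Cons by auto
    qed simp
    then show ?thesis
      using xs x by (intro exI[of _ "x # xs"]) (auto simp: not_less)
  qed simp
qed

lemma order_linked_imp_has_ham_path:
  "finite S \<Longrightarrow> inj_on A S \<Longrightarrow> order_linked A R S \<Longrightarrow> has_ham_path R S"
  unfolding has_ham_path_def using order_linked_sorted_path by blast

section \<open>The two-pointer merge\<close>

definition is_succ_fun :: "('a \<Rightarrow> 'b::linorder) \<Rightarrow> ('a \<Rightarrow> 'a option) \<Rightarrow> 'a set \<Rightarrow> bool" where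
  "is_succ_fun A nx S \<longleftrightarrow>
     (\<forall>x\<in>S. (nx x = None \<longleftrightarrow> (\<forall>y\<in>S. A y \<le> A x)) \<and> (\<forall>y. nx x = Some y \<longrightarrow> order_succ A S x y))"

lemma is_succ_fun_cong:
  "(\<And>x. x \<in> S \<Longrightarrow> nx x = nx' x) \<Longrightarrow> is_succ_fun A nx S \<longleftrightarrow> is_succ_fun A nx' S"
  unfolding is_succ_fun_def by simp

text \<open>\<open>p\<close> and \<open>q\<close> are the current pointers into \<open>P\<close> and \<open>Q\<close>: everything below both of them
  has been passed, together with the arc to its successor in \<open>P \<union> Q\<close>.\<close>

definition merge_inv ::
  "('a \<Rightarrow> 'b::linorder) \<Rightarrow> 'a set \<Rightarrow> 'a set \<Rightarrow> ('a \<times> 'a) set \<Rightarrow> 'a \<Rightarrow> 'a \<Rightarrow> ('a \<times> 'a) set \<Rightarrow> bool"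
where
  "merge_inv A P Q E0 p q E \<longleftrightarrow> p \<in> P \<and> q \<in> Q \<and>
     (\<forall>x\<in>P. A x < A p \<longrightarrow> A x < A q) \<and> (\<forall>x\<in>Q. A x < A q \<longrightarrow> A x < A p) \<and>
     (\<forall>x y. order_succ A (P \<union> Q) x y \<and> A x < A p \<and> A x < A q \<longrightarrow> (x, y) \<in> E0 \<union> E)"

lemma merge_inv_sym: "merge_inv A P Q E0 p q E \<Longrightarrow> merge_inv A Q P E0 q p E"
  unfolding merge_inv_def by (simp add: Un_commute)

lemma merge_inv_succ_in_other:
  assumes inj: "inj_on A (P \<union> Q)" and inv: "merge_inv A P Q E0 p q E" and less: "A p < A q"
    and succ: "order_succ A (P \<union> Q) p y" and "y \<in> Q"
  shows "y = q"
proof -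
  have "q \<in> Q" and Q_below: "\<forall>x\<in>Q. A x < A q \<longrightarrow> A x < A p"
    using inv unfolding merge_inv_def by auto
  have "A p < A y" using succ unfolding order_succ_def by auto
  then have "\<not> A y < A q" using Q_below \<open>y \<in> Q\<close> by force
  moreover have "\<not> A q < A y" using succ \<open>q \<in> Q\<close> less unfolding order_succ_def by auto
  ultimately show ?thesis using inj \<open>y \<in> Q\<close> \<open>q \<in> Q\<close> by (auto dest: inj_onD)
qed

lemma merge_inv_last:
  assumes inj: "inj_on A (P \<union> Q)" and Q_linked: "order_linked A E0 Q"
    and inv: "merge_inv A P Q E0 p q E" and less: "A p < A q" and p_max: "\<forall>y\<in>P. A y \<le> A p"
  shows "order_linked A (E0 \<union> insert (p, q) E) (P \<union> Q)"
  unfolding order_linked_def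
proof (intro allI impI)
  have "p \<in> P" and Q_below: "\<forall>x\<in>Q. A x < A q \<longrightarrow> A x < A p"
    and done_below: "\<forall>x y. order_succ A (P \<union> Q) x y \<and> A x < A p \<and> A x < A q \<longrightarrow> (x, y) \<in> E0 \<union> E"
    using inv unfolding merge_inv_def by auto
  fix x y assume xy: "order_succ A (P \<union> Q) x y"
  then have x: "x \<in> P \<union> Q" and y: "y \<in> P \<union> Q" and "A x < A y"
    unfolding order_succ_def by auto
  consider "A x < A p" | "x = p" | "A p < A x"
    using inj x \<open>p \<in> P\<close> by (metis UnI1 inj_onD linorder_neqE)
  then show "(x, y) \<in> E0 \<union> insert (p, q) E"
  proof cases
    case 1
    then show ?thesis using done_below xy less by auto
  next
    case 2
    then have "y \<in> Q" using p_max \<open>A x < A y\<close> y by force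
    then show ?thesis using merge_inv_succ_in_other[OF inj inv less] xy 2 by auto
  next
    case 3
    then have "x \<in> Q" using p_max x by force
    then have "\<not> A x < A q" using Q_below 3 by force
    then have "y \<in> Q" using y p_max \<open>A x < A y\<close> less by force
    then have "order_succ A Q x y" using order_succ_subset[OF xy \<open>x \<in> Q\<close>] by blast
    then show ?thesis using Q_linked unfolding order_linked_def by auto
  qed
qed

lemma merge_inv_advance:
  assumes inj: "inj_on A (P \<union> Q)" and P_linked: "order_linked A E0 P"
    and inv: "merge_inv A P Q E0 p q E" and less: "A p < A q" and succ: "order_succ A P p p'"
  shows "merge_inv A P Q E0 p' q (insert (p, q) E)"
proof -
  have "p \<in> P" "q \<in> Q"
    and P_below: "\<forall>x\<in>P. A x < A p \<longrightarrow> A x < A q"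
    and Q_below: "\<forall>x\<in>Q. A x < A q \<longrightarrow> A x < A p"
    and done_below: "\<forall>x y. order_succ A (P \<union> Q) x y \<and> A x < A p \<and> A x < A q \<longrightarrow> (x, y) \<in> E0 \<union> E"
    using inv unfolding merge_inv_def by auto
  have "p' \<in> P" and "A p < A p'" and no_between: "\<forall>z\<in>P. \<not> (A p < A z \<and> A z < A p')"
    using succ unfolding order_succ_def by auto
  have "\<forall>x\<in>P. A x < A p' \<longrightarrow> A x < A q"
    using P_below no_between less inj \<open>p \<in> P\<close> by (metis UnI1 inj_onD linorder_neqE)
  moreover have "\<forall>x\<in>Q. A x < A q \<longrightarrow> A x < A p'"
    using Q_below \<open>A p < A p'\<close> by force
  moreover have "(x, y) \<in> E0 \<union> insert (p, q) E"
    if xy: "order_succ A (P \<union> Q) x y" and "A x < A p'" "A x < A q" for x y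
  proof -
    have x: "x \<in> P \<union> Q" and y: "y \<in> P \<union> Q" using xy unfolding order_succ_def by auto
    consider "A x < A p" | "x = p" | "A p < A x"
      using inj x \<open>p \<in> P\<close> by (metis UnI1 inj_onD linorder_neqE)
    then show ?thesis
    proof cases
      case 1
      then show ?thesis using done_below xy less by auto
    next
      case 2
      show ?thesis
      proof (cases "y \<in> P")
        case True
        then have "order_succ A P x y" using order_succ_subset[OF xy] 2 \<open>p \<in> P\<close> by blast
        then show ?thesis using P_linked unfolding order_linked_def by auto
      next
        case False
        then show ?thesis using merge_inv_succ_in_other[OF inj inv less] xy 2 y by auto
      qed
    next
      case 3
      then show ?thesis using x no_between Q_below that by force
    qed
  qed
  ultimately show ?thesis using \<open>p' \<in> P\<close> \<open>q \<in> Q\<close> unfolding merge_inv_def by simp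
qed

definition merge_state_inv ::
  "('a \<Rightarrow> 'b::linorder) \<Rightarrow> 'a set \<Rightarrow> 'a set \<Rightarrow> ('a \<times> 'a) set \<Rightarrow>
   'a option \<times> 'a option \<times> ('a \<times> 'a) set \<Rightarrow> bool"
where
  "merge_state_inv A P Q E0 s = (case s of (po, qo, E) \<Rightarrow>
     E \<subseteq> increasing_arcs A (P \<union> Q) \<and>
     (case (po, qo) of
        (Some p, Some q) \<Rightarrow> merge_inv A P Q E0 p q E
      | _ \<Rightarrow> order_linked A (E0 \<union> E) (P \<union> Q)))"

lemma merge_state_inv_swap:
  "merge_state_inv A Q P E0 (qo, po, E) \<longleftrightarrow> merge_state_inv A P Q E0 (po, qo, E)"
  unfolding merge_state_inv_def
  by (cases po; cases qo) (auto simp: Un_commute dest: merge_inv_sym)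

lemma merge_state_inv_advance:
  assumes inj: "inj_on A (P \<union> Q)" and nxp: "is_succ_fun A nxp P"
    and P_linked: "order_linked A E0 P" and Q_linked: "order_linked A E0 Q"
    and inv: "merge_state_inv A P Q E0 (Some p, Some q, E)" and less: "A p < A q"
  shows "merge_state_inv A P Q E0 (nxp p, Some q, insert (p, q) E)"
proof -
  have inv': "merge_inv A P Q E0 p q E" and "E \<subseteq> increasing_arcs A (P \<union> Q)"
    using inv unfolding merge_state_inv_def by auto
  moreover have "p \<in> P" "q \<in> Q" using inv' unfolding merge_inv_def by auto
  ultimately have "insert (p, q) E \<subseteq> increasing_arcs A (P \<union> Q)"
    using less by (auto simp: increasing_arcs_def)
  moreover have "merge_inv A P Q E0 p' q (insert (p, q) E)" if "nxp p = Some p'" for p'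
    using merge_inv_advance[OF inj P_linked inv' less] nxp \<open>p \<in> P\<close> that
    unfolding is_succ_fun_def by auto
  moreover have "order_linked A (E0 \<union> insert (p, q) E) (P \<union> Q)" if "nxp p = None"
    using merge_inv_last[OF inj Q_linked inv' less] nxp \<open>p \<in> P\<close> that
    unfolding is_succ_fun_def by auto
  ultimately show ?thesis unfolding merge_state_inv_def by (cases "nxp p") auto
qed

definition upper_part :: "('a \<Rightarrow> 'b::linorder) \<Rightarrow> 'a set \<Rightarrow> 'a option \<Rightarrow> 'a set" where
  "upper_part A P po = (case po of None \<Rightarrow> {} | Some p \<Rightarrow> {x\<in>P. A p \<le> A x})"

lemma card_upper_part_succ_less:
  assumes "finite P" "is_succ_fun A nx P" "p \<in> P"
  shows "card (upper_part A P (nx p)) < card (upper_part A P (Some p))"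
proof -
  have "upper_part A P (nx p) \<subset> upper_part A P (Some p)"
  proof (cases "nx p")
    case None
    then show ?thesis using assms by (auto simp: upper_part_def)
  next
    case (Some p')
    then have "order_succ A P p p'" using assms unfolding is_succ_fun_def by auto
    then show ?thesis using Some assms(3) unfolding upper_part_def order_succ_def by force
  qed
  then show ?thesis using assms(1) by (intro psubset_card_mono) (auto simp: upper_part_def)
qed

lemma merge_arcs_order_linked:
  assumes fin: "finite P" "finite Q" and disj: "P \<inter> Q = {}" and inj: "inj_on A (P \<union> Q)"
    and p0: "p0 \<in> P" "\<forall>x\<in>P. A p0 \<le> A x" and q0: "q0 \<in> Q" "\<forall>x\<in>Q. A q0 \<le> A x"
    and nxp: "is_succ_fun A nxp P" and nxq: "is_succ_fun A nxq Q"
    and P_linked: "order_linked A E0 P" and Q_linked: "order_linked A E0 Q"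
  shows "order_linked A (E0 \<union> merge_arcs A nxp nxq p0 q0) (P \<union> Q) \<and>
         merge_arcs A nxp nxq p0 q0 \<subseteq> increasing_arcs A (P \<union> Q)"
proof -
  let ?running = "\<lambda>(p :: nat option, q :: nat option, E :: (nat \<times> nat) set). p \<noteq> None \<and> q \<noteq> None"
  let ?step = "merge_step A nxp nxq"
  let ?inv = "merge_state_inv A P Q E0"
  let ?measure = "\<lambda>(po, qo, E :: (nat \<times> nat) set). card (upper_part A P po) + card (upper_part A Q qo)"
  have step: "?inv (?step s) \<and> ?measure (?step s) < ?measure s"
    if inv: "?inv s" and running: "?running s" for s
  proof -
    obtain p q E where s: "s = (Some p, Some q, E)" using running by (cases s) auto
    have "p \<in> P" "q \<in> Q" using inv unfolding s merge_state_inv_def merge_inv_def by auto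
    consider "A p < A q" | "A q < A p"
      using inj disj \<open>p \<in> P\<close> \<open>q \<in> Q\<close> by (metis UnI1 UnI2 disjoint_iff inj_onD linorder_neqE)
    then show ?thesis
    proof cases
      case 1
      then have "?step s = (nxp p, Some q, insert (p, q) E)" by (simp add: s merge_step_def)
      then show ?thesis
        using merge_state_inv_advance[OF inj nxp P_linked Q_linked _ 1] inv
          card_upper_part_succ_less[OF fin(1) nxp \<open>p \<in> P\<close>] by (simp add: s)
    next
      case 2
      then have "?step s = (Some p, nxq q, insert (q, p) E)" by (simp add: s merge_step_def)
      moreover have "inj_on A (Q \<union> P)" using inj by (simp add: Un_commute)
      ultimately show ?thesis
        using merge_state_inv_advance[of A Q P nxq E0 q p E] nxq P_linked Q_linked 2 inv
          card_upper_part_succ_less[OF fin(2) nxq \<open>q \<in> Q\<close>]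
        by (simp add: s merge_state_inv_swap)
    qed
  qed
  have init: "?inv (Some p0, Some q0, {})"
    using p0 q0 unfolding merge_state_inv_def merge_inv_def order_succ_def increasing_arcs_def
    by force
  obtain t where t: "while_option ?running ?step (Some p0, Some q0, {}) = Some t"
    using measure_while_option_Some[of ?inv ?running ?step ?measure, OF step init] by blast
  obtain po qo E where t_eq: "t = (po, qo, E)" by (cases t)
  have "?inv t" using while_option_rule[where P = ?inv, OF _ t init] step by blast
  moreover have "\<not> ?running t" using while_option_stop[OF t] .
  moreover have "merge_arcs A nxp nxq p0 q0 = E" unfolding merge_arcs_def using t t_eq by simp
  ultimately show ?thesis unfolding t_eq merge_state_inv_def by (cases po; cases qo) auto
qed

lemma min_by_eq_None_iff: "min_by A S = None \<longleftrightarrow> S = {}"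
  by (simp add: min_by_def)

lemma min_by_SomeD:
  assumes "finite S" "min_by A S = Some m"
  shows "m \<in> S" "\<forall>z\<in>S. A m \<le> A z"
proof -
  have "S \<noteq> {}" using assms(2) by (auto simp: min_by_def)
  then show "m \<in> S" "\<forall>z\<in>S. A m \<le> A z"
    using arg_min_if_finite[OF assms(1), of A] assms(2)
    by (auto simp: min_by_def arg_min_on_def not_less)
qed

lemma is_succ_fun_min_out_neighbour:
  assumes fin: "finite C" and linked: "order_linked A R C"
    and incr: "\<forall>(x, y)\<in>R. x \<in> C \<longrightarrow> y \<in> C \<longrightarrow> A x < A y"
  shows "is_succ_fun A (\<lambda>v. min_by A {w\<in>C. (v, w) \<in> R}) C"
  unfolding is_succ_fun_def
proof (intro ballI conjI allI impI)
  fix x assume xC: "x \<in> C"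
  let ?Out = "{w\<in>C. (x, w) \<in> R}"
  have fin_Out: "finite ?Out" using fin by auto
  have above: "A x < A w" if "w \<in> ?Out" for w using incr xC that by blast
  have succ_Out: "y \<in> ?Out" if "order_succ A C x y" for y
    using linked that unfolding order_linked_def order_succ_def by auto
  show "min_by A ?Out = None \<longleftrightarrow> (\<forall>y\<in>C. A y \<le> A x)"
  proof
    assume "min_by A ?Out = None"
    then have "?Out = {}" by (simp add: min_by_eq_None_iff)
    then show "\<forall>y\<in>C. A y \<le> A x"
      using order_succ_exists[OF fin xC, where A = A] succ_Out by (metis empty_iff not_le)
  next
    assume "\<forall>y\<in>C. A y \<le> A x"
    then have "?Out = {}" using above by force
    then show "min_by A ?Out = None" by (simp add: min_by_eq_None_iff)
  qed
  fix m assume m: "min_by A ?Out = Some m"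
  have mOut: "m \<in> ?Out" and m_min: "\<forall>z\<in>?Out. A m \<le> A z"
    using min_by_SomeD[OF fin_Out m] by auto
  obtain y where y: "order_succ A C x y" using order_succ_exists[OF fin xC _ above[OF mOut]] mOut by blast
  have "A m \<le> A y" using m_min succ_Out[OF y] by blast
  then show "order_succ A C x m"
    using y mOut above[OF mOut] xC unfolding order_succ_def by force
qed

lemma component_merge_order_linked:
  assumes fin: "finite C" "finite D" and ne: "C \<noteq> {}" "D \<noteq> {}" and disj: "C \<inter> D = {}" and inj: "inj_on A (C \<union> D)"
    and C_linked: "order_linked A H C" and D_linked: "order_linked A H D"
    and incr: "\<forall>(x, y)\<in>H. A x < A y"
  shows "order_linked A (component_merge A H C D) (C \<union> D)"
proof -
  have min_in: "arg_min A (\<lambda>x. x \<in> S) \<in> S" "\<forall>x\<in>S. A (arg_min A (\<lambda>x. x \<in> S)) \<le> A x"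
    if "finite S" "S \<noteq> {}" for S
    using arg_min_if_finite[OF that, of A] by (auto simp: arg_min_on_def not_less)
  show ?thesis
    unfolding component_merge_def
    using merge_arcs_order_linked[OF fin disj inj min_in[OF fin(1) ne(1)] min_in[OF fin(2) ne(2)]
        is_succ_fun_min_out_neighbour[OF fin(1) C_linked]
        is_succ_fun_min_out_neighbour[OF fin(2) D_linked] C_linked D_linked] incr
    by blast
qed

section \<open>Increasing forests of maximum degree two\<close>

definition neighbours :: "('a \<times> 'a) set \<Rightarrow> 'a \<Rightarrow> 'a set" where
  "neighbours F v = {w. (v, w) \<in> F \<or> (w, v) \<in> F}"

locale increasing_forest =
  fixes V :: "nat set" and A :: "nat \<Rightarrow> real" and F :: "(nat \<times> nat) set"
  assumes finite_V: "finite V"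
    and inj_A: "inj_on A V"
    and arcs_in_V: "F \<subseteq> V \<times> V"
    and arc_increasing: "(u, v) \<in> F \<Longrightarrow> A u < A v"
    and unique_parent: "(u, v) \<in> F \<Longrightarrow> (u', v) \<in> F \<Longrightarrow> u = u'"
    and degree_le_two: "x \<in> neighbours F v \<Longrightarrow> y \<in> neighbours F v \<Longrightarrow> z \<in> neighbours F v \<Longrightarrow>
                        x = y \<or> x = z \<or> y = z"
begin

abbreviation subtree :: "nat \<Rightarrow> nat set" where
  "subtree r \<equiv> F\<^sup>* `` {r}"

abbreviation children_merge_arcs :: "nat \<Rightarrow> nat \<Rightarrow> (nat \<times> nat) set" where
  "children_merge_arcs a b \<equiv>
     merge_arcs A (\<lambda>v. min_by A (children F v)) (\<lambda>v. min_by A (children F v)) a b"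

lemma A_eq_imp_eq: "x \<in> V \<Longrightarrow> y \<in> V \<Longrightarrow> A x = A y \<Longrightarrow> x = y"
  using inj_A by (meson inj_onD)

lemma rtrancl_A_le: "(x, y) \<in> F\<^sup>* \<Longrightarrow> A x \<le> A y"
  by (induction rule: rtrancl_induct) (auto dest: arc_increasing)

lemma subtree_subset: "r \<in> V \<Longrightarrow> subtree r \<subseteq> V"
proof
  fix y assume "r \<in> V" "y \<in> subtree r"
  then have "(r, y) \<in> F\<^sup>*" "r \<in> V" by auto
  then show "y \<in> V" using arcs_in_V by (induction rule: rtrancl_induct) auto
qed

lemma finite_subtree: "r \<in> V \<Longrightarrow> finite (subtree r)"
  using finite_V subtree_subset finite_subset by blast

lemma single_child_if_parent:
  assumes "(u, v) \<in> F" "(v, z) \<in> F" "(v, z') \<in> F"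
  shows "z = z'"
proof -
  have "u \<in> neighbours F v" "z \<in> neighbours F v" "z' \<in> neighbours F v"
    using assms by (auto simp: neighbours_def)
  moreover have "u \<noteq> z" "u \<noteq> z'"
    using arc_increasing assms by (metis less_asym)+
  ultimately show ?thesis using degree_le_two by blast
qed

lemma ancestors_comparable:
  assumes "(a, x) \<in> F\<^sup>*" "(b, x) \<in> F\<^sup>*"
  shows "(a, b) \<in> F\<^sup>* \<or> (b, a) \<in> F\<^sup>*"
proof -
  have "single_valued (F\<inverse>)" using unique_parent by (auto simp: single_valued_def)
  moreover have "(x, a) \<in> (F\<inverse>)\<^sup>*" "(x, b) \<in> (F\<inverse>)\<^sup>*"
    using assms by (simp_all add: rtrancl_converse)
  ultimately show ?thesis
    using single_valued_confluent by (metis converse_iff rtrancl_converse)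
qed

lemma root_unique:
  assumes "is_root V F r" "is_root V F r'" "x \<in> subtree r" "x \<in> subtree r'"
  shows "r = r'"
proof -
  have "(r, r') \<in> F\<^sup>* \<or> (r', r) \<in> F\<^sup>*" using ancestors_comparable assms(3,4) by simp
  then show ?thesis using assms(1,2) unfolding is_root_def by (metis rtranclE)
qed

lemma subtree_root_le: "y \<in> subtree r \<Longrightarrow> A r \<le> A y"
  using rtrancl_A_le by simp

lemma subtree_eq_insert_children: "subtree r = insert r (\<Union>c\<in>children F r. subtree c)"
proof
  show "subtree r \<subseteq> insert r (\<Union>c\<in>children F r. subtree c)"
  proof
    fix y assume "y \<in> subtree r"
    then have "(r, y) \<in> F\<^sup>*" by simp
    then show "y \<in> insert r (\<Union>c\<in>children F r. subtree c)"
      by (cases rule: converse_rtranclE) (auto simp: children_def)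
  qed
  show "insert r (\<Union>c\<in>children F r. subtree c) \<subseteq> subtree r"
    by (auto simp: children_def intro: converse_rtrancl_into_rtrancl)
qed

lemma sibling_subtrees_disjoint:
  assumes "(r, a) \<in> F" "(r, b) \<in> F" "a \<noteq> b"
  shows "subtree a \<inter> subtree b = {}"
proof -
  have not_below: "(c, d) \<notin> F\<^sup>*" if "(r, c) \<in> F" "(r, d) \<in> F" "c \<noteq> d" for c d
  proof
    assume "(c, d) \<in> F\<^sup>*"
    then obtain w where "(c, w) \<in> F\<^sup>*" "(w, d) \<in> F" using \<open>c \<noteq> d\<close> by (metis rtranclE)
    then have "A c \<le> A r" using unique_parent[OF _ that(2)] rtrancl_A_le by blast
    then show False using arc_increasing[OF that(1)] by simp
  qed
  show ?thesis
  proof (rule equals0I)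
    fix x assume "x \<in> subtree a \<inter> subtree b"
    then have "(a, x) \<in> F\<^sup>*" "(b, x) \<in> F\<^sup>*" by auto
    then show False
      using ancestors_comparable not_below[OF assms] not_below[OF assms(2,1)] assms(3) by blast
  qed
qed

lemma chain_below_child:
  assumes "(r, a) \<in> F" "y \<in> subtree a" "(y, z) \<in> F" "(y, z') \<in> F"
  shows "z = z'"
proof -
  obtain u where "(u, y) \<in> F" using assms(1,2) by (auto elim: rtranclE)
  then show ?thesis using single_child_if_parent assms(3,4) by blast
qed

context
  fixes c :: nat
  assumes c_in_V: "c \<in> V"
    and chain: "\<And>y z z'. y \<in> subtree c \<Longrightarrow> (y, z) \<in> F \<Longrightarrow> (y, z') \<in> F \<Longrightarrow> z = z'"
begin

lemma chain_subtree_comparable: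
  assumes "x \<in> subtree c" "y \<in> subtree c"
  shows "(x, y) \<in> F\<^sup>* \<or> (y, x) \<in> F\<^sup>*"
proof -
  \<comment> \<open>below \<open>c\<close> the relation \<open>F\<close> is a partial function, so all of \<open>subtree c\<close> lies on one path\<close>
  let ?R = "F \<inter> subtree c \<times> UNIV"
  have in_R: "(c, x) \<in> ?R\<^sup>*" if "(c, x) \<in> F\<^sup>*" for x
    using that
  proof (induction rule: rtrancl_induct)
    case (step y z)
    then have "(y, z) \<in> ?R" by simp
    then show ?case using step.IH by (rule rtrancl_into_rtrancl[rotated])
  qed simp
  have "single_valued ?R" using chain by (auto simp: single_valued_def)
  moreover have "(c, x) \<in> ?R\<^sup>*" "(c, y) \<in> ?R\<^sup>*" using in_R assms by auto
  ultimately have "(x, y) \<in> ?R\<^sup>* \<or> (y, x) \<in> ?R\<^sup>*" by (rule single_valued_confluent)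
  moreover have "?R\<^sup>* \<subseteq> F\<^sup>*" by (simp add: rtrancl_mono)
  ultimately show ?thesis by blast
qed

lemma chain_subtree_order_linked: "order_linked A F (subtree c)"
  unfolding order_linked_def
proof (intro allI impI)
  fix x y assume xy: "order_succ A (subtree c) x y"
  then have x: "x \<in> subtree c" and y: "y \<in> subtree c" and "A x < A y"
    and no_between: "\<forall>z\<in>subtree c. \<not> (A x < A z \<and> A z < A y)"
    unfolding order_succ_def by auto
  have "(x, y) \<in> F\<^sup>*"
    using chain_subtree_comparable[OF x y] rtrancl_A_le \<open>A x < A y\<close> by force
  moreover have "x \<noteq> y" using \<open>A x < A y\<close> by auto
  ultimately obtain z where z: "(x, z) \<in> F" "(z, y) \<in> F\<^sup>*" by (metis converse_rtranclE)
  have "z \<in> subtree c" using x z(1) by (auto intro: rtrancl_into_rtrancl)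
  moreover have "A x < A z" "A z \<le> A y" using arc_increasing[OF z(1)] rtrancl_A_le[OF z(2)] .
  ultimately have "A z = A y" using no_between by force
  then have "z = y" using A_eq_imp_eq subtree_subset[OF c_in_V] \<open>z \<in> subtree c\<close> y by blast
  then show "(x, y) \<in> F" using z(1) by simp
qed

lemma chain_subtree_succ_fun: "is_succ_fun A (\<lambda>v. min_by A (children F v)) (subtree c)"
proof -
  have eq: "min_by A (children F v) = min_by A {w \<in> subtree c. (v, w) \<in> F}"
    if "v \<in> subtree c" for v
  proof -
    have "children F v = {w \<in> subtree c. (v, w) \<in> F}"
      using that by (auto simp: children_def intro: rtrancl_into_rtrancl)
    then show ?thesis by simp
  qed
  have "is_succ_fun A (\<lambda>v. min_by A (children F v)) (subtree c) \<longleftrightarrow>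
        is_succ_fun A (\<lambda>v. min_by A {w \<in> subtree c. (v, w) \<in> F}) (subtree c)"
    by (rule is_succ_fun_cong) (rule eq)
  moreover have "is_succ_fun A (\<lambda>v. min_by A {w \<in> subtree c. (v, w) \<in> F}) (subtree c)"
    using is_succ_fun_min_out_neighbour[OF finite_subtree[OF c_in_V] chain_subtree_order_linked]
      arc_increasing by blast
  ultimately show ?thesis by blast
qed

end

lemma children_merge_arcs_order_linked:
  assumes children: "children F r = {a, b}" and "a \<noteq> b"
  shows "order_linked A (F \<union> children_merge_arcs a b) (subtree a \<union> subtree b) \<and>
         children_merge_arcs a b \<subseteq> increasing_arcs A (subtree a \<union> subtree b)"
proof -
  have arcs: "(r, a) \<in> F" "(r, b) \<in> F" using children by (auto simp: children_def)
  then have "a \<in> V" "b \<in> V" using arcs_in_V by auto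
  note chain_a = chain_below_child[OF arcs(1)] and chain_b = chain_below_child[OF arcs(2)]
  have "subtree a \<union> subtree b \<subseteq> V" using subtree_subset \<open>a \<in> V\<close> \<open>b \<in> V\<close> by blast
  then have "inj_on A (subtree a \<union> subtree b)" using inj_A inj_on_subset by blast
  moreover have "\<forall>x\<in>subtree a. A a \<le> A x" "\<forall>x\<in>subtree b. A b \<le> A x"
    using subtree_root_le by blast+
  ultimately show ?thesis
    using merge_arcs_order_linked[OF finite_subtree[OF \<open>a \<in> V\<close>] finite_subtree[OF \<open>b \<in> V\<close>]
        sibling_subtrees_disjoint[OF arcs \<open>a \<noteq> b\<close>] _ _ _ _ _
        chain_subtree_succ_fun[OF \<open>a \<in> V\<close> chain_a] chain_subtree_succ_fun[OF \<open>b \<in> V\<close> chain_b]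
        chain_subtree_order_linked[OF \<open>a \<in> V\<close> chain_a] chain_subtree_order_linked[OF \<open>b \<in> V\<close> chain_b]]
    by simp
qed

lemma subset_merge_subtrees: "F \<subseteq> merge_subtrees V A F"
  unfolding merge_subtrees_def by blast

lemma children_merge_arcs_subset_merge_subtrees:
  "is_root V F r \<Longrightarrow> children F r = {a, b} \<Longrightarrow> a \<noteq> b \<Longrightarrow>
   children_merge_arcs a b \<subseteq> merge_subtrees V A F"
  unfolding merge_subtrees_def by blast

lemma merge_subtrees_arc_in_tree:
  assumes "(x, y) \<in> merge_subtrees V A F"
  shows "(x, y) \<in> F \<or> (\<exists>r. is_root V F r \<and> x \<in> subtree r \<and> y \<in> subtree r \<and> A x < A y)"
proof (cases "(x, y) \<in> F")
  case False
  then obtain r a b where r: "is_root V F r" "children F r = {a, b}" "a \<noteq> b"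
    and xy: "(x, y) \<in> children_merge_arcs a b"
    using assms unfolding merge_subtrees_def by blast
  have "(x, y) \<in> increasing_arcs A (subtree a \<union> subtree b)"
    using children_merge_arcs_order_linked[OF r(2,3)] xy by blast
  moreover have "subtree a \<union> subtree b \<subseteq> subtree r"
    using subtree_eq_insert_children[of r] r(2) by blast
  ultimately show ?thesis using r(1) unfolding increasing_arcs_def by blast
qed simp

lemma merge_subtrees_increasing: "(x, y) \<in> merge_subtrees V A F \<Longrightarrow> A x < A y"
  using merge_subtrees_arc_in_tree arc_increasing by blast

lemma merge_subtrees_closed:
  assumes root: "is_root V F r" and x: "x \<in> subtree r"
    and arc: "(x, y) \<in> merge_subtrees V A F \<or> (y, x) \<in> merge_subtrees V A F"
  shows "y \<in> subtree r"
proof -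
  have "(x, y) \<in> F \<or> (y, x) \<in> F \<or> (\<exists>r'. is_root V F r' \<and> x \<in> subtree r' \<and> y \<in> subtree r')"
    using arc merge_subtrees_arc_in_tree[of x y] merge_subtrees_arc_in_tree[of y x] by blast
  then consider "(x, y) \<in> F" | "(y, x) \<in> F"
    | r' where "is_root V F r'" "x \<in> subtree r'" "y \<in> subtree r'"
    by blast
  then show ?thesis
  proof cases
    case 1
    then show ?thesis using x by (auto intro: rtrancl_into_rtrancl)
  next
    case 2
    then have "x \<noteq> r" using root by (auto simp: is_root_def)
    then obtain w where "(r, w) \<in> F\<^sup>*" "(w, x) \<in> F" using x by (auto elim: rtranclE)
    then show ?thesis using unique_parent[OF _ 2] by auto
  next
    case 3
    then show ?thesis using root_unique[OF root _ x] by blast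
  qed
qed

lemma branching_only_at_root:
  assumes root: "is_root V F r" and "y \<in> subtree r" "(y, z) \<in> F" "(y, z') \<in> F" "z \<noteq> z'"
  shows "y = r \<and> children F r = {z, z'}"
proof -
  have "y = r"
  proof (rule ccontr)
    assume "y \<noteq> r"
    then obtain u where "(u, y) \<in> F" using assms(2) by (auto elim: rtranclE)
    then show False using single_child_if_parent assms(3-5) by blast
  qed
  moreover have "children F r = {z, z'}"
  proof
    have "w \<in> {z, z'}" if "(r, w) \<in> F" for w
      using degree_le_two[of w r z z'] that assms(3-5) \<open>y = r\<close> by (auto simp: neighbours_def)
    then show "children F r \<subseteq> {z, z'}" by (auto simp: children_def)
    show "{z, z'} \<subseteq> children F r" using assms(3,4) \<open>y = r\<close> by (auto simp: children_def)
  qed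
  ultimately show ?thesis ..
qed

lemma two_children_subtree_order_linked:
  assumes root: "is_root V F r" and children: "children F r = {a, b}" and "a \<noteq> b"
  shows "order_linked A (merge_subtrees V A F) (subtree r)"
  unfolding order_linked_def
proof (intro allI impI)
  let ?H = "merge_subtrees V A F"
  have subtree_r: "subtree r = insert r (subtree a \<union> subtree b)"
    using subtree_eq_insert_children[of r] children by simp
  have "r \<in> V" using root by (simp add: is_root_def)
  have arcs: "(r, a) \<in> F" "(r, b) \<in> F" using children by (auto simp: children_def)
  fix x y assume xy: "order_succ A (subtree r) x y"
  then have x: "x \<in> subtree r" and y: "y \<in> subtree r" and "A x < A y"
    and no_between: "\<forall>z\<in>subtree r. \<not> (A x < A z \<and> A z < A y)"
    unfolding order_succ_def by auto
  have y_below: "y \<in> subtree a \<union> subtree b"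
    using subtree_r y subtree_root_le[OF x] \<open>A x < A y\<close> by auto
  show "(x, y) \<in> ?H"
  proof (cases "x = r")
    case True
    have "y = c" if "(r, c) \<in> F" "y \<in> subtree c" for c
    proof -
      have "c \<in> subtree r" using that(1) by auto
      then have "\<not> A c < A y" using no_between arc_increasing[OF that(1)] True by blast
      then have "A c = A y" using subtree_root_le[OF that(2)] by simp
      then show ?thesis
        using A_eq_imp_eq subtree_subset[OF \<open>r \<in> V\<close>] \<open>c \<in> subtree r\<close> y by blast
    qed
    then have "(x, y) \<in> F" using y_below arcs True by blast
    then show ?thesis using subset_merge_subtrees by blast
  next
    case False
    then have "x \<in> subtree a \<union> subtree b" using x subtree_r by blast
    then have "order_succ A (subtree a \<union> subtree b) x y"
      using order_succ_subset[OF xy _ y_below] subtree_r by blast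
    then have "(x, y) \<in> F \<union> children_merge_arcs a b"
      using children_merge_arcs_order_linked[OF children \<open>a \<noteq> b\<close>]
      unfolding order_linked_def by blast
    then show ?thesis
      using subset_merge_subtrees children_merge_arcs_subset_merge_subtrees[OF root children \<open>a \<noteq> b\<close>]
      by blast
  qed
qed

lemma merge_subtrees_order_linked:
  assumes root: "is_root V F r"
  shows "order_linked A (merge_subtrees V A F) (subtree r)"
proof (cases "\<forall>y\<in>subtree r. \<forall>z z'. (y, z) \<in> F \<longrightarrow> (y, z') \<in> F \<longrightarrow> z = z'")
  case True
  have "r \<in> V" using root by (simp add: is_root_def)
  then show ?thesis
    using chain_subtree_order_linked[of r] True order_linked_mono subset_merge_subtrees by blast
next
  case False
  then obtain y z z' where "y \<in> subtree r" "(y, z) \<in> F" "(y, z') \<in> F" "z \<noteq> z'" by blast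
  then have "children F r = {z, z'}" using branching_only_at_root[OF root] by blast
  then show ?thesis using two_children_subtree_order_linked[OF root _ \<open>z \<noteq> z'\<close>] by blast
qed

end

section \<open>Components of the merged forest\<close>

lemma sym_rtrancl_Un_converse: "(x, y) \<in> (E \<union> E\<inverse>)\<^sup>* \<Longrightarrow> (y, x) \<in> (E \<union> E\<inverse>)\<^sup>*"
  using sym_rtrancl[OF sym_Un_converse] by (rule symD)

lemma components_disjoint:
  assumes "C \<in> components V E" "D \<in> components V E" "C \<noteq> D"
  shows "C \<inter> D = {}"
proof (rule equals0I)
  fix w assume w: "w \<in> C \<inter> D"
  obtain x y where C: "C = component_of V E x" and D: "D = component_of V E y"
    using assms(1,2) by (auto simp: components_def)
  have "(x, w) \<in> (E \<union> E\<inverse>)\<^sup>*" "(y, w) \<in> (E \<union> E\<inverse>)\<^sup>*"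
    using w by (auto simp: C D component_of_def)
  then have "(x, y) \<in> (E \<union> E\<inverse>)\<^sup>*" "(y, x) \<in> (E \<union> E\<inverse>)\<^sup>*"
    by (meson rtrancl_trans sym_rtrancl_Un_converse)+
  then have "C = D" unfolding C D component_of_def by (blast intro: rtrancl_trans)
  then show False using assms(3) by contradiction
qed

text \<open>If every tree of \<open>F\<close> is a path, no root has two children and merging adds no arcs.\<close>

lemma graph_H_eq_merge_subtrees:
  assumes "F \<subseteq> V \<times> V"
  shows "graph_H V A F = merge_subtrees V A F"
proof (cases "\<forall>C \<in> components V F. is_directed_path_comp F C")
  case True
  have "\<not> (is_root V F r \<and> children F r = {a, b} \<and> a \<noteq> b)" for r a b
  proof
    assume r: "is_root V F r \<and> children F r = {a, b} \<and> a \<noteq> b"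
    then have "r \<in> V" and arcs: "(r, a) \<in> F" "(r, b) \<in> F"
      by (auto simp: is_root_def children_def)
    let ?C = "component_of V F r"
    have "?C \<in> components V F" using \<open>r \<in> V\<close> by (simp add: components_def)
    then obtain xs where xs: "distinct xs" "{(u, v) \<in> F. u \<in> ?C \<and> v \<in> ?C} = set (zip xs (tl xs))"
      using True unfolding is_directed_path_comp_def by blast
    have "r \<in> ?C" "a \<in> ?C" "b \<in> ?C"
      using \<open>r \<in> V\<close> arcs assms by (auto simp: component_of_def)
    then have "(r, a) \<in> set (zip xs (tl xs))" "(r, b) \<in> set (zip xs (tl xs))"
      using xs(2) arcs by blast+
    then have "a = b" using xs(1)
      by (auto simp: in_set_zip nth_tl nth_eq_iff_index_eq)
    then show False using r by simp
  qed
  then have "merge_subtrees V A F = F" unfolding merge_subtrees_def by blast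
  then show ?thesis using True unfolding graph_H_def by simp
next
  case False
  then show ?thesis unfolding graph_H_def by (simp only: if_False)
qed

context increasing_forest
begin

lemma component_of_merge_subtrees:
  assumes "v \<in> V"
  shows "\<exists>r. is_root V F r \<and> component_of V (merge_subtrees V A F) v = subtree r"
proof -
  let ?H = "merge_subtrees V A F"
  let ?R = "?H \<union> ?H\<inverse>"
  let ?C = "component_of V ?H v"
  have C_iff: "u \<in> ?C \<longleftrightarrow> u \<in> V \<and> (v, u) \<in> ?R\<^sup>*" for u by (simp add: component_of_def)
  have "finite ?C" using finite_V by (simp add: component_of_def)
  moreover have "v \<in> ?C" using assms C_iff by blast
  \<comment> \<open>the \<open>A\<close>-least vertex of the component is a root: a parent would be smaller and adjacent\<close>
  ultimately obtain r where rC: "r \<in> ?C" and r_min: "\<forall>z\<in>?C. \<not> A z < A r"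
    using arg_min_if_finite(1,2)[of ?C A] by blast
  have vr: "(v, r) \<in> ?R\<^sup>*" and "r \<in> V" using rC C_iff by auto
  have root: "is_root V F r"
    unfolding is_root_def
  proof (intro conjI allI notI \<open>r \<in> V\<close>)
    fix u assume ur: "(u, r) \<in> F"
    then have "u \<in> ?C"
      using C_iff arcs_in_V subset_merge_subtrees vr by (blast intro: rtrancl_into_rtrancl)
    then show False using r_min arc_increasing[OF ur] by blast
  qed
  have "?C = subtree r"
  proof
    show "subtree r \<subseteq> ?C"
    proof
      fix y assume y: "y \<in> subtree r"
      have "F\<^sup>* \<subseteq> ?R\<^sup>*" using subset_merge_subtrees by (intro rtrancl_mono) blast
      then have "(v, y) \<in> ?R\<^sup>*" using vr y by (blast intro: rtrancl_trans)
      then show "y \<in> ?C" using C_iff subtree_subset[OF \<open>r \<in> V\<close>] y by blast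
    qed
    show "?C \<subseteq> subtree r"
    proof
      fix u assume "u \<in> ?C"
      then have "(r, u) \<in> ?R\<^sup>*"
        using C_iff sym_rtrancl_Un_converse[OF vr] by (blast intro: rtrancl_trans)
      then show "u \<in> subtree r"
      proof (induction rule: rtrancl_induct)
        case (step a b)
        then show ?case using merge_subtrees_closed[OF root, of a b] by blast
      qed simp
    qed
  qed
  then show ?thesis using root by blast
qed

lemma component_merge_subtrees_order_linked:
  assumes "C \<in> components V (merge_subtrees V A F)"
  shows "finite C \<and> C \<noteq> {} \<and> C \<subseteq> V \<and> order_linked A (merge_subtrees V A F) C"
proof -
  obtain r where "is_root V F r" "C = subtree r"
    using assms component_of_merge_subtrees by (auto simp: components_def)
  then show ?thesis
    using finite_subtree subtree_subset merge_subtrees_order_linked by (auto simp: is_root_def)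
qed

end

section \<open>DFS forests of the reach-one graph\<close>

lemma mod_eq_imp_eq_on_interval:
  assumes "a \<in> {1..n}" "b \<in> {1..(n::nat)}" "a mod n = b mod n"
  shows "a = b"
proof -
  have "x mod n = (if x = n then 0 else x)" if "x \<in> {1..n}" for x
    using that by auto
  then show ?thesis using assms by (auto split: if_splits)
qed

lemma reach_one_graph_subset: "reach_one_graph n A \<subseteq> {1..n} \<times> {1..n}"
  unfolding reach_one_graph_def by auto

lemma reach_one_graph_increasing: "(u, v) \<in> reach_one_graph n A \<Longrightarrow> A u < A v"
  unfolding reach_one_graph_def by auto

lemma reach_one_graph_degree_le_two:
  assumes "x \<in> neighbours G v" "y \<in> neighbours G v" "z \<in> neighbours G v"
    and "G \<subseteq> reach_one_graph n A"
  shows "x = y \<or> x = z \<or> y = z"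
proof -
  let ?succ = "\<lambda>w. w \<in> {1..n} \<and> w mod n = (v + 1) mod n"
  let ?pred = "\<lambda>w. w \<in> {1..n} \<and> (w + 1) mod n = v mod n"
  have "?succ w \<or> ?pred w" if "w \<in> neighbours G v" for w
    using that assms(4) unfolding neighbours_def reach_one_graph_def by auto
  then have "?succ x \<or> ?pred x" "?succ y \<or> ?pred y" "?succ z \<or> ?pred z"
    using assms(1-3) by blast+
  moreover have succ_unique: "w = w'" if "?succ w" "?succ w'" for w w'
    using that mod_eq_imp_eq_on_interval[of w n w'] by simp
  moreover have pred_unique: "w = w'" if "?pred w" "?pred w'" for w w'
  proof -
    have "(w + 1) mod n = (w' + 1) mod n" using that by simp
    then have "w mod n = w' mod n" by (simp add: nat_mod_eq_iff)
    then show ?thesis using that mod_eq_imp_eq_on_interval by blast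
  qed
  ultimately show ?thesis by blast
qed

definition dfs_inv :: "(nat \<times> nat) set \<Rightarrow> dfs_state \<Rightarrow> bool" where
  "dfs_inv G s = (case s of (vis, st, todo, T) \<Rightarrow>
     T \<subseteq> G \<and> (\<forall>(u, v)\<in>T. v \<in> vis) \<and> (\<forall>u u' v. (u, v) \<in> T \<longrightarrow> (u', v) \<in> T \<longrightarrow> u = u'))"

lemma dfs_inv_step:
  assumes "finite G" "dfs_inv G s"
  shows "dfs_inv G (dfs_step A G s)"
proof -
  obtain vis st todo T where s: "s = (vis, st, todo, T)" by (cases s)
  show ?thesis
  proof (cases st)
    case Nil
    then show ?thesis using assms(2) unfolding s dfs_step_def dfs_inv_def
      by (cases todo) auto
  next
    case (Cons v rest)
    define U where "U = {w. (v, w) \<in> G \<and> w \<notin> vis}"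
    show ?thesis
    proof (cases "U = {}")
      case True
      then have "dfs_step A G s = (vis, rest, todo, T)"
        unfolding s Cons dfs_step_def U_def by (simp add: Let_def)
      then show ?thesis using assms(2) unfolding s dfs_inv_def by auto
    next
      case False
      define w where "w = arg_min A (\<lambda>x. x \<in> U)"
      have "U \<subseteq> snd ` G" unfolding U_def by force
      then have "finite U" using assms(1) finite_subset by blast
      then have "w \<in> U" using arg_min_if_finite(1)[OF _ False] unfolding w_def arg_min_on_def by blast
      \<comment> \<open>the new tree arc ends in a previously unvisited vertex, so it cannot create a second parent\<close>
      then have "(v, w) \<in> G" "w \<notin> vis" unfolding U_def by auto
      moreover have "dfs_step A G s = (insert w vis, w # st, todo, insert (v, w) T)"
        using False unfolding s Cons dfs_step_def U_def w_def by (simp add: Let_def)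
      ultimately show ?thesis using assms(2) unfolding s dfs_inv_def by auto
    qed
  qed
qed

lemma dfs_forest_inv:
  assumes "finite G"
  shows "dfs_forest A G vl \<subseteq> G \<and>
         (\<forall>u u' v. (u, v) \<in> dfs_forest A G vl \<longrightarrow> (u', v) \<in> dfs_forest A G vl \<longrightarrow> u = u')"
proof (cases "while_option (\<lambda>(vis, st, todo, T). st \<noteq> [] \<or> todo \<noteq> []) (dfs_step A G) ({}, [], vl, {})")
  case None
  then show ?thesis unfolding dfs_forest_def by simp
next
  case (Some t)
  obtain vis st todo T where t: "t = (vis, st, todo, T)" by (cases t)
  have "dfs_inv G t"
    using while_option_rule[where P = "dfs_inv G", OF _ Some] dfs_inv_step[OF assms]
    by (auto simp: dfs_inv_def)
  moreover have "dfs_forest A G vl = T" unfolding dfs_forest_def using Some t by simp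
  ultimately show ?thesis unfolding t dfs_inv_def by auto
qed

lemma dfs_forest_increasing_forest:
  assumes "inj_on A {1..n}"
  shows "increasing_forest {1..n} A (dfs_forest A (reach_one_graph n A) vl)"
proof -
  have "finite (reach_one_graph n A)"
    using reach_one_graph_subset finite_subset by blast
  note F = dfs_forest_inv[OF this, of A vl]
  show ?thesis
  proof
    show "finite {1..n}" by simp
    show "inj_on A {1..n}" by (rule assms)
    show "dfs_forest A (reach_one_graph n A) vl \<subseteq> {1..n} \<times> {1..n}"
      using F reach_one_graph_subset by blast
    show "A u < A v" if "(u, v) \<in> dfs_forest A (reach_one_graph n A) vl" for u v
      using F that reach_one_graph_increasing by blast
    show "u = u'"
      if "(u, v) \<in> dfs_forest A (reach_one_graph n A) vl" "(u', v) \<in> dfs_forest A (reach_one_graph n A) vl"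
      for u u' v
      using F that by blast
    show "x = y \<or> x = z \<or> y = z"
      if "x \<in> neighbours (dfs_forest A (reach_one_graph n A) vl) v"
        "y \<in> neighbours (dfs_forest A (reach_one_graph n A) vl) v"
        "z \<in> neighbours (dfs_forest A (reach_one_graph n A) vl) v"
      for x y z v
      using reach_one_graph_degree_le_two[OF that] F by blast
  qed
qed

theorem theorem10:
  fixes n :: nat and A :: "nat \<Rightarrow> real" and vl :: "nat list" and H1 H2 :: "nat set"
  assumes distinct_vals: "inj_on A {1..n}"
    and visiting_list: "set vl = {1..n}"
    and H1: "H1 \<in> components {1..n} (graph_H {1..n} A (dfs_forest A (reach_one_graph n A) vl))"
    and H2: "H2 \<in> components {1..n} (graph_H {1..n} A (dfs_forest A (reach_one_graph n A) vl))"
    and distinct_comps: "H1 \<noteq> H2"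
  shows "has_ham_path
           (component_merge A (graph_H {1..n} A (dfs_forest A (reach_one_graph n A) vl)) H1 H2)
           (H1 \<union> H2)"
proof -
  let ?F = "dfs_forest A (reach_one_graph n A) vl"
  let ?H = "graph_H {1..n} A ?F"
  interpret increasing_forest "{1..n}" A ?F
    using dfs_forest_increasing_forest[OF distinct_vals] .
  have H_eq: "?H = merge_subtrees {1..n} A ?F"
    using graph_H_eq_merge_subtrees arcs_in_V by blast
  have C1: "finite H1" "H1 \<noteq> {}" "H1 \<subseteq> {1..n}" "order_linked A ?H H1"
    using component_merge_subtrees_order_linked H1 unfolding H_eq by auto
  have C2: "finite H2" "H2 \<noteq> {}" "H2 \<subseteq> {1..n}" "order_linked A ?H H2"
    using component_merge_subtrees_order_linked H2 unfolding H_eq by auto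
  have "inj_on A (H1 \<union> H2)" using distinct_vals by (rule inj_on_subset) (use C1(3) C2(3) in blast)
  moreover have "order_linked A (component_merge A ?H H1 H2) (H1 \<union> H2)"
    using component_merge_order_linked[OF C1(1) C2(1) C1(2) C2(2)
        components_disjoint[OF H1 H2 distinct_comps] \<open>inj_on A (H1 \<union> H2)\<close> C1(4) C2(4)]
      merge_subtrees_increasing unfolding H_eq by blast
  ultimately show ?thesis using order_linked_imp_has_ham_path C1(1) C2(1) by blast
qed

end
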